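(* Let $\varepsilon>0$, $p\in(0,1/2)$, and $R=1-H(p)-\varepsilon$. Let $\mathcal{C}\subseteq\mathbb{F}_2^n$ be a random linear code of rate $R$. Then with probability $1-\exp(-\Omega_\varepsilon(n))$, $\mathcal{C}$ satisfies $S_{\mathcal{C}}\le 2$.
   Context: $H(p)=-p\log_2 p-(1-p)\log_2(1-p)$. $L_{\mathcal{C}}(x)=|\{c\in\mathcal{C}:\Delta(x,c)\le pn\}|$ with $\Delta$ Hamming distance; $A_{\mathcal{C}}(x)=2^{\frac{\varepsilon n L_{\mathcal{C}}(x)}{1+\varepsilon}}$ and $S_{\mathcal{C}}=\mathbb{E}_{x\sim\mathbb{F}_2^n}[A_{\mathcal{C}}(x)]$ ($x$ uniform). A random linear code of rate $R$ is $\mathrm{span}(b_1,\dots,b_k)$ with $k=Rn$ (an integer) and $b_i$ independent uniform in $\mathbb{F}_2^n$. *)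

theory Defs
  imports Complex_Main
begin

definition H :: "real \<Rightarrow> real" where
  "H p = - p * log 2 p - (1 - p) * log 2 (1 - p)"

text \<open>Vectors of F_2^n: functions nat => bool vanishing outside {..<n}
  (True = 1, False = 0).\<close>
definition vecs :: "nat \<Rightarrow> (nat \<Rightarrow> bool) set" where
  "vecs n = {v. \<forall>i. n \<le> i \<longrightarrow> v i = False}"

definition hamming :: "nat \<Rightarrow> (nat \<Rightarrow> bool) \<Rightarrow> (nat \<Rightarrow> bool) \<Rightarrow> nat" where
  "hamming n x y = card {i. i < n \<and> x i \<noteq> y i}"

text \<open>Generator tuples (b_0,...,b_{k-1}) with each b_i in F_2^n
  (unused indices fixed to zero so the set is finite).\<close>
definition gen_tuples :: "nat \<Rightarrow> nat \<Rightarrow> (nat \<Rightarrow> nat \<Rightarrow> bool) set" where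
  "gen_tuples n k = {b. (\<forall>i<k. b i \<in> vecs n) \<and> (\<forall>i. k \<le> i \<longrightarrow> b i = (\<lambda>_. False))}"

definition lin_comb :: "(nat \<Rightarrow> nat \<Rightarrow> bool) \<Rightarrow> nat set \<Rightarrow> nat \<Rightarrow> bool" where
  "lin_comb b S = (\<lambda>j. odd (card {i\<in>S. b i j}))"

definition span_code :: "nat \<Rightarrow> (nat \<Rightarrow> nat \<Rightarrow> bool) \<Rightarrow> (nat \<Rightarrow> bool) set" where
  "span_code k b = {lin_comb b S | S. S \<subseteq> {..<k}}"

definition list_size :: "nat \<Rightarrow> real \<Rightarrow> (nat \<Rightarrow> bool) set \<Rightarrow> (nat \<Rightarrow> bool) \<Rightarrow> nat" where
  "list_size n p C x = card {c \<in> C. real (hamming n x c) \<le> p * real n}"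

definition A_pot :: "nat \<Rightarrow> real \<Rightarrow> real \<Rightarrow> (nat \<Rightarrow> bool) set \<Rightarrow> (nat \<Rightarrow> bool) \<Rightarrow> real" where
  "A_pot n p \<epsilon> C x = 2 powr (\<epsilon> * real n * real (list_size n p C x) / (1 + \<epsilon>))"

definition S_pot :: "nat \<Rightarrow> real \<Rightarrow> real \<Rightarrow> (nat \<Rightarrow> bool) set \<Rightarrow> real" where
  "S_pot n p \<epsilon> C = (\<Sum>x\<in>vecs n. A_pot n p \<epsilon> C x) / 2 ^ n"

text \<open>Probability, over independent uniform b_0..b_{k-1} in F_2^n, that the
  random linear code span(b) satisfies property P.\<close>
definition rlc_prob :: "nat \<Rightarrow> nat \<Rightarrow> ((nat \<Rightarrow> bool) set \<Rightarrow> bool) \<Rightarrow> real" where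
  "rlc_prob n k P = real (card {b \<in> gen_tuples n k. P (span_code k b)}) / real (card (gen_tuples n k))"

end

theory Submission
  imports Defs "HOL-Analysis.Convex" "HOL-Real_Asymp.Real_Asymp"
begin

text \<open>
  Adjoining a uniformly random vector v to a code C gives a code inside C \<union> (C + v), whose list
  sizes are at most L_C(x) + L_C(x + v); hence its potential is at most A_C(x) A_C(x + v), and
  averaging over x and v bounds the expected new S by S_C^2. By concavity of ln, the expected
  value of ln S therefore at most doubles with each generator, so a random linear code of
  dimension k has E ln S \<le> 2^k ln S_{{0}}, where {0} is the zero code. The volume bound
  2^(H(p) n) for the Hamming ball of radius pn gives ln S_{{0}} \<le> 2^(\<epsilon> n/(1+\<epsilon>) + H(p) n - n),
  so E ln S \<le> 2^(-\<epsilon>^2 n/(1+\<epsilon>)).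
  Since S \<ge> 1, Markov's inequality for ln S bounds the probability that S > 2.
\<close>

definition vec_add :: "(nat \<Rightarrow> bool) \<Rightarrow> (nat \<Rightarrow> bool) \<Rightarrow> nat \<Rightarrow> bool" where
  "vec_add x v = (\<lambda>j. x j \<noteq> v j)"

lemma vec_add_cancel [simp]: "vec_add (vec_add x v) v = x"
  by (auto simp: vec_add_def fun_eq_iff)

lemma inj_vec_add_right: "inj (\<lambda>c. vec_add c v)"
  by (metis injI vec_add_cancel)

lemma bij_betw_vec_add: "x \<in> vecs n \<Longrightarrow> bij_betw (vec_add x) (vecs n) (vecs n)"
  by (rule bij_betw_byWitness[where f'="vec_add x"]) (auto simp: vec_add_def vecs_def)

lemma sum_vecs_translate: "x \<in> vecs n \<Longrightarrow> (\<Sum>v\<in>vecs n. g (vec_add x v)) = (\<Sum>y\<in>vecs n. g y)"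
  by (rule sum.reindex_bij_betw[OF bij_betw_vec_add])

lemma bij_betw_vecs_Pow: "bij_betw (\<lambda>x. {i. x i}) (vecs n) (Pow {..<n})"
  by (rule bij_betw_byWitness[where f'="\<lambda>S i. i \<in> S"]) (auto simp: vecs_def not_le[symmetric])

lemma finite_vecs: "finite (vecs n)"
  using bij_betw_finite[OF bij_betw_vecs_Pow] by simp

lemma card_vecs: "card (vecs n) = 2 ^ n"
  using bij_betw_same_card[OF bij_betw_vecs_Pow] by (simp add: card_Pow)

lemma hamming_vec_add: "hamming n x (vec_add c v) = hamming n (vec_add x v) c"
  unfolding hamming_def vec_add_def by (rule arg_cong[where f=card]) auto

lemma hamming_zero: "x \<in> vecs n \<Longrightarrow> hamming n x (\<lambda>_. False) = card {i. x i}"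
  unfolding hamming_def vecs_def by (rule arg_cong[where f=card]) (auto simp: not_le[symmetric])

lemma list_size_translate:
  "list_size n p ((\<lambda>c. vec_add c v) ` C) x = list_size n p C (vec_add x v)"
proof -
  have "{c \<in> (\<lambda>c. vec_add c v) ` C. real (hamming n x c) \<le> p * real n}
      = (\<lambda>c. vec_add c v) ` {c \<in> C. real (hamming n (vec_add x v) c) \<le> p * real n}"
    by (auto simp flip: hamming_vec_add)
  then show ?thesis
    unfolding list_size_def by (simp add: card_image inj_on_subset[OF inj_vec_add_right])
qed

lemma list_size_union_le:
  assumes "finite C" "finite D" "E \<subseteq> C \<union> D"
  shows "list_size n p E x \<le> list_size n p C x + list_size n p D x"
proof -
  have "list_size n p E x \<le> card ({c \<in> C. real (hamming n x c) \<le> p * real n}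
                                   \<union> {c \<in> D. real (hamming n x c) \<le> p * real n})"
    unfolding list_size_def using assms by (intro card_mono) auto
  also have "\<dots> \<le> list_size n p C x + list_size n p D x"
    unfolding list_size_def by (rule card_Un_le)
  finally show ?thesis .
qed

lemma A_pot_ge_one: "e \<ge> 0 \<Longrightarrow> A_pot n p e C x \<ge> 1"
  unfolding A_pot_def by (rule ge_one_powr_ge_zero) auto

lemma A_pot_le_mult_translate:
  assumes "e \<ge> 0" "finite C" "E \<subseteq> C \<union> (\<lambda>c. vec_add c v) ` C"
  shows "A_pot n p e E x \<le> A_pot n p e C x * A_pot n p e C (vec_add x v)"
proof -
  have "list_size n p E x \<le> list_size n p C x + list_size n p C (vec_add x v)"
    using list_size_union_le[OF assms(2) _ assms(3)] assms(2) by (simp add: list_size_translate)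
  then have "e * real n * real (list_size n p E x) / (1 + e)
      \<le> e * real n * real (list_size n p C x) / (1 + e)
        + e * real n * real (list_size n p C (vec_add x v)) / (1 + e)"
    using assms(1)
    by (simp add: divide_right_mono mult_left_mono flip: add_divide_distrib distrib_left of_nat_add)
  then show ?thesis unfolding A_pot_def by (simp add: powr_add[symmetric])
qed

lemma S_pot_ge_one: "e \<ge> 0 \<Longrightarrow> S_pot n p e C \<ge> 1"
  using sum_mono[of "vecs n" "\<lambda>_. 1" "A_pot n p e C"] A_pot_ge_one
  by (simp add: S_pot_def card_vecs)

lemma sum_ln_le_card_mult_ln_mean:
  fixes x :: "'a \<Rightarrow> real"
  assumes "finite S" "S \<noteq> {}" "\<And>i. i \<in> S \<Longrightarrow> x i > 0"
  shows "(\<Sum>i\<in>S. ln (x i)) \<le> card S * ln ((\<Sum>i\<in>S. x i) / card S)"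
proof -
  have card: "real (card S) > 0"
    using assms by (simp add: card_gt_0_iff)
  have "(\<Sum>i\<in>S. 1 / card S * ln (x i)) \<le> ln (\<Sum>i\<in>S. (1 / card S) *\<^sub>R x i)"
    by (rule concave_on_sum[OF assms(1,2) ln_concave]) (use assms card in auto)
  then show ?thesis
    using card by (simp add: sum_distrib_left[symmetric] sum_divide_distrib[symmetric] field_simps)
qed

lemma sum_S_pot_extensions_le:
  assumes "e \<ge> 0" "finite C" "\<And>v. D v \<subseteq> C \<union> (\<lambda>c. vec_add c v) ` C"
  shows "(\<Sum>v\<in>vecs n. S_pot n p e (D v)) \<le> 2 ^ n * (S_pot n p e C)\<^sup>2"
proof -
  let ?A = "A_pot n p e C"
  have "(\<Sum>v\<in>vecs n. S_pot n p e (D v)) \<le> (\<Sum>v\<in>vecs n. \<Sum>x\<in>vecs n. ?A x * ?A (vec_add x v)) / 2 ^ n"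
    unfolding S_pot_def sum_divide_distrib[symmetric]
    by (intro divide_right_mono sum_mono A_pot_le_mult_translate assms) auto
  also have "\<dots> = (\<Sum>x\<in>vecs n. ?A x * (\<Sum>v\<in>vecs n. ?A (vec_add x v))) / 2 ^ n"
    by (subst sum.swap) (simp add: sum_distrib_left)
  also have "\<dots> = (\<Sum>x\<in>vecs n. ?A x) * (\<Sum>y\<in>vecs n. ?A y) / 2 ^ n"
    by (simp add: sum_vecs_translate sum_distrib_right)
  also have "\<dots> = 2 ^ n * (S_pot n p e C)\<^sup>2"
    by (simp add: S_pot_def power2_eq_square)
  finally show ?thesis .
qed

lemma sum_ln_S_pot_extensions_le:
  assumes "e \<ge> 0" "finite C" "\<And>v. D v \<subseteq> C \<union> (\<lambda>c. vec_add c v) ` C"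
  shows "(\<Sum>v\<in>vecs n. ln (S_pot n p e (D v))) \<le> 2 ^ n * (2 * ln (S_pot n p e C))"
proof -
  have pos: "S_pot n p e (D v) > 0" for v
    using S_pot_ge_one[OF assms(1)] by (rule less_le_trans[OF zero_less_one])
  have "vecs n \<noteq> {}"
    using card_vecs[of n] by auto
  then have "(\<Sum>v\<in>vecs n. ln (S_pot n p e (D v)))
      \<le> 2 ^ n * ln ((\<Sum>v\<in>vecs n. S_pot n p e (D v)) / 2 ^ n)"
    using sum_ln_le_card_mult_ln_mean[OF finite_vecs _ pos] by (simp add: card_vecs)
  also have "\<dots> \<le> 2 ^ n * ln ((S_pot n p e C)\<^sup>2)"
    using sum_S_pot_extensions_le[OF assms] finite_vecs pos \<open>vecs n \<noteq> {}\<close>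
    by (intro mult_left_mono ln_mono sum_pos divide_pos_pos) (auto simp: divide_le_eq mult.commute)
  also have "\<dots> = 2 ^ n * (2 * ln (S_pot n p e C))"
    by (simp add: ln_realpow)
  finally show ?thesis .
qed

lemma lin_comb_insert:
  assumes "finite S" "i \<notin> S"
  shows "lin_comb b (insert i S) = vec_add (lin_comb b S) (b i)"
proof
  fix m
  have "{j \<in> insert i S. b j m} = (if b i m then insert i {j \<in> S. b j m} else {j \<in> S. b j m})"
    by auto
  then show "lin_comb b (insert i S) m = vec_add (lin_comb b S) (b i) m"
    using assms by (simp add: lin_comb_def vec_add_def)
qed

lemma span_code_eq_image: "span_code i b = lin_comb b ` Pow {..<i}"
  by (auto simp: span_code_def)

lemma finite_span_code: "finite (span_code i b)"
  by (simp add: span_code_eq_image)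

lemma span_code_0: "span_code 0 b = {\<lambda>_. False}"
  by (auto simp: span_code_def lin_comb_def)

lemma span_code_Suc_subset:
  "span_code (Suc i) b \<subseteq> span_code i b \<union> (\<lambda>c. vec_add c (b i)) ` span_code i b"
proof
  fix c assume "c \<in> span_code (Suc i) b"
  then obtain S where S: "S \<subseteq> {..<Suc i}" and c: "c = lin_comb b S"
    by (auto simp: span_code_def)
  show "c \<in> span_code i b \<union> (\<lambda>c. vec_add c (b i)) ` span_code i b"
  proof (cases "i \<in> S")
    case False
    with S have "S \<subseteq> {..<i}"
      by (auto simp: less_Suc_eq)
    with c show ?thesis
      unfolding span_code_def by blast
  next
    case True
    have S': "S - {i} \<subseteq> {..<i}"
      using S by (auto simp: less_Suc_eq)
    then have "c = vec_add (lin_comb b (S - {i})) (b i)"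
      using c lin_comb_insert[of "S - {i}" i b] True finite_subset[OF S']
      by (simp add: insert_absorb)
    with S' show ?thesis
      unfolding span_code_def by blast
  qed
qed

lemma span_code_cong: "(\<And>j. j < i \<Longrightarrow> b j = b' j) \<Longrightarrow> span_code i b = span_code i b'"
  unfolding span_code_eq_image lin_comb_def
  by (intro image_cong refl ext arg_cong[where f="\<lambda>A. odd (card A)"]) auto

lemma gen_tuples_0: "gen_tuples n 0 = {\<lambda>_ _. False}"
  by (auto simp: gen_tuples_def)

lemma gen_tuples_Suc:
  "gen_tuples n (Suc i) = (\<lambda>(b, v). b(i := v)) ` (gen_tuples n i \<times> vecs n)"
proof
  show "gen_tuples n (Suc i) \<subseteq> (\<lambda>(b, v). b(i := v)) ` (gen_tuples n i \<times> vecs n)"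
  proof
    fix b assume b: "b \<in> gen_tuples n (Suc i)"
    then have "(b(i := (\<lambda>_. False)), b i) \<in> gen_tuples n i \<times> vecs n"
      by (auto simp: gen_tuples_def less_Suc_eq)
    then show "b \<in> (\<lambda>(b, v). b(i := v)) ` (gen_tuples n i \<times> vecs n)"
      by (force intro: rev_image_eqI)
  qed
  show "(\<lambda>(b, v). b(i := v)) ` (gen_tuples n i \<times> vecs n) \<subseteq> gen_tuples n (Suc i)"
    by (auto simp: gen_tuples_def less_Suc_eq)
qed

lemma inj_on_gen_tuples_extend: "inj_on (\<lambda>(b, v). b(i := v)) (gen_tuples n i \<times> vecs n)"
proof (rule inj_onI, clarify)
  fix b v b' v'
  assume "b \<in> gen_tuples n i" "b' \<in> gen_tuples n i" and eq: "b(i := v) = b'(i := v')"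
  then have "b i = b' i"
    by (simp add: gen_tuples_def)
  with eq show "b = b' \<and> v = v'"
    by (metis fun_upd_same fun_upd_triv fun_upd_upd)
qed

lemma finite_gen_tuples: "finite (gen_tuples n i)"
  by (induction i) (simp_all add: gen_tuples_0 gen_tuples_Suc finite_vecs)

lemma card_gen_tuples: "card (gen_tuples n i) = 2 ^ (n * i)"
  by (induction i)
    (simp_all add: gen_tuples_0 gen_tuples_Suc card_image[OF inj_on_gen_tuples_extend]
      card_cartesian_product card_vecs power_add)

lemma sum_ln_S_pot_span_code_le:
  assumes "e \<ge> 0"
  shows "(\<Sum>b\<in>gen_tuples n i. ln (S_pot n p e (span_code i b)))
     \<le> 2 ^ i * real (card (gen_tuples n i)) * ln (S_pot n p e {\<lambda>_. False})"
proof (induction i)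
  case 0
  then show ?case
    by (simp add: gen_tuples_0 span_code_0)
next
  case (Suc i)
  let ?lnS = "\<lambda>i b. ln (S_pot n p e (span_code i b))"
  have "(\<Sum>b\<in>gen_tuples n (Suc i). ?lnS (Suc i) b)
      = (\<Sum>b\<in>gen_tuples n i. \<Sum>v\<in>vecs n. ?lnS (Suc i) (b(i := v)))"
    unfolding gen_tuples_Suc sum.reindex[OF inj_on_gen_tuples_extend]
    by (simp add: sum.cartesian_product case_prod_beta')
  also have "\<dots> \<le> (\<Sum>b\<in>gen_tuples n i. 2 ^ n * (2 * ?lnS i b))"
  proof (rule sum_mono)
    fix b
    have "span_code i (b(i := v)) = span_code i b" for v
      by (rule span_code_cong) simp
    then show "(\<Sum>v\<in>vecs n. ?lnS (Suc i) (b(i := v))) \<le> 2 ^ n * (2 * ?lnS i b)"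
      using span_code_Suc_subset[of i "b(i := _)"]
      by (intro sum_ln_S_pot_extensions_le assms finite_span_code) simp
  qed
  also have "\<dots> \<le> 2 ^ n * (2 * (2 ^ i * real (card (gen_tuples n i)) * ln (S_pot n p e {\<lambda>_. False})))"
    using Suc.IH by (simp add: sum_distrib_left[symmetric])
  also have "\<dots> = 2 ^ Suc i * real (card (gen_tuples n (Suc i))) * ln (S_pot n p e {\<lambda>_. False})"
    by (simp add: card_gen_tuples power_add)
  finally show ?case .
qed

lemma sum_Pow_bernoulli_weights:
  fixes p :: real
  shows "(\<Sum>S\<in>Pow {..<n}. p ^ card S * (1 - p) ^ (n - card S)) = 1"
proof -
  have "(\<Sum>S\<in>Pow {..<n}. p ^ card S * (1 - p) ^ (n - card S))
      = (\<Sum>S\<in>Pow {..<n}. (\<Prod>_\<in>S. p) * (\<Prod>_\<in>{..<n} - S. 1 - p))"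
    by (intro sum.cong refl) (auto simp: card_Diff_subset finite_subset)
  also have "\<dots> = (\<Prod>_\<in>{..<n}. p + (1 - p))"
    by (rule prod_add[symmetric]) simp
  finally show ?thesis
    by simp
qed

lemma bernoulli_weight_ge:
  fixes p :: real
  assumes "0 < p" "p \<le> 1/2" "w \<le> n" "real w \<le> p * real n"
  shows "p ^ w * (1 - p) ^ (n - w) \<ge> 2 powr (- H p * real n)"
proof -
  \<comment> \<open>Since p \<le> 1 - p the weight decreases in w, and at w = pn it equals 2^(-H(p) n).\<close>
  have "ln p - ln (1 - p) \<le> 0"
    using assms(1,2) by simp
  then have "(- H p * real n) * ln 2 = real n * ln (1 - p) + (p * real n) * (ln p - ln (1 - p))"
    by (simp add: H_def log_def field_simps)
  also have "\<dots> \<le> real n * ln (1 - p) + real w * (ln p - ln (1 - p))"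
    using mult_right_mono_neg[OF assms(4) \<open>ln p - ln (1 - p) \<le> 0\<close>] by simp
  also have "\<dots> = ln (p ^ w * (1 - p) ^ (n - w))"
    using assms by (simp add: ln_mult ln_realpow of_nat_diff algebra_simps)
  finally show ?thesis
    using assms(1,2) by (simp add: powr_def mult.commute ln_ge_iff)
qed

lemma card_hamming_ball_le:
  fixes p :: real
  assumes "0 < p" "p \<le> 1/2"
  shows "card {x \<in> vecs n. real (hamming n x (\<lambda>_. False)) \<le> p * real n} \<le> 2 powr (H p * real n)"
proof -
  let ?B = "{x \<in> vecs n. real (hamming n x (\<lambda>_. False)) \<le> p * real n}"
  let ?P = "{S \<in> Pow {..<n}. real (card S) \<le> p * real n}"
  have "inj_on Collect ?B"
    using bij_betw_imp_inj_on[OF bij_betw_vecs_Pow] by (rule inj_on_subset) blast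
  moreover have "Collect ` ?B = ?P"
  proof (intro equalityI subsetI)
    fix S assume "S \<in> Collect ` ?B"
    then show "S \<in> ?P"
      using bij_betw_apply[OF bij_betw_vecs_Pow] by (auto simp: hamming_zero)
  next
    fix S assume S: "S \<in> ?P"
    then have "(\<lambda>i. i \<in> S) \<in> vecs n"
      by (auto simp: vecs_def)
    with S have "(\<lambda>i. i \<in> S) \<in> ?B"
      by (simp add: hamming_zero)
    then show "S \<in> Collect ` ?B"
      by (rule rev_image_eqI) simp
  qed
  ultimately have card: "card ?B = card ?P"
    using card_image by fastforce
  have "card ?P * 2 powr (- H p * real n) = (\<Sum>S\<in>?P. 2 powr (- H p * real n))"
    by simp
  also have "\<dots> \<le> (\<Sum>S\<in>?P. p ^ card S * (1 - p) ^ (n - card S))"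
  proof (rule sum_mono)
    fix S assume S: "S \<in> ?P"
    then have "card S \<le> n"
      using card_mono[of "{..<n}" S] by auto
    with S show "2 powr (- H p * real n) \<le> p ^ card S * (1 - p) ^ (n - card S)"
      using assms by (intro bernoulli_weight_ge) auto
  qed
  also have "\<dots> \<le> (\<Sum>S\<in>Pow {..<n}. p ^ card S * (1 - p) ^ (n - card S))"
    by (intro sum_mono2) (use assms in auto)
  also have "\<dots> = 1"
    by (rule sum_Pow_bernoulli_weights)
  finally have "card ?P \<le> 1 / 2 powr (- H p * real n)"
    by (simp add: le_divide_eq)
  then show ?thesis
    by (simp add: card powr_minus_divide)
qed

lemma ln_S_pot_zero_code_le:
  assumes "e \<ge> 0"
  shows "ln (S_pot n p e {\<lambda>_. False})
    \<le> 2 powr (e * real n / (1 + e))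
        * card {x \<in> vecs n. real (hamming n x (\<lambda>_. False)) \<le> p * real n} / 2 ^ n"
    (is "_ \<le> ?t * real (card ?B) / _")
proof -
  have "A_pot n p e {\<lambda>_. False} x = (if x \<in> ?B then ?t else 1)" if "x \<in> vecs n" for x
  proof -
    have "{c \<in> {\<lambda>_. False}. real (hamming n x c) \<le> p * real n} = (if x \<in> ?B then {\<lambda>_. False} else {})"
      using that by auto
    then show ?thesis
      by (simp add: A_pot_def list_size_def)
  qed
  then have "(\<Sum>x\<in>vecs n. A_pot n p e {\<lambda>_. False} x) = (\<Sum>x\<in>vecs n. if x \<in> ?B then ?t else 1)"
    by (rule sum.cong[OF refl])
  also have "\<dots> \<le> (\<Sum>x\<in>vecs n. 1 + (if x \<in> ?B then ?t else 0))"
    by (intro sum_mono) auto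
  also have "\<dots> = 2 ^ n + ?t * card ?B"
    by (simp add: sum.distrib card_vecs sum.If_cases finite_vecs Int_def)
  finally have "S_pot n p e {\<lambda>_. False} - 1 \<le> ?t * card ?B / 2 ^ n"
    by (simp add: S_pot_def divide_le_eq field_simps)
  moreover have "ln (S_pot n p e {\<lambda>_. False}) \<le> S_pot n p e {\<lambda>_. False} - 1"
    using less_le_trans[OF zero_less_one S_pot_ge_one[OF assms]] by (rule ln_le_minus_one)
  ultimately show ?thesis
    by linarith
qed

lemma sum_ln_S_pot_random_code_le:
  assumes "e > 0" "0 < p" "p \<le> 1/2" "real k = (1 - H p - e) * real n"
  shows "(\<Sum>b\<in>gen_tuples n k. ln (S_pot n p e (span_code k b)))
    \<le> card (gen_tuples n k) * 2 powr (- e\<^sup>2 * real n / (1 + e))"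
proof -
  let ?t = "2 powr (e * real n / (1 + e))" and ?N = "real (card (gen_tuples n k))"
  have "ln (S_pot n p e {\<lambda>_. False})
      \<le> ?t * card {x \<in> vecs n. real (hamming n x (\<lambda>_. False)) \<le> p * real n} / 2 ^ n"
    using assms(1) by (intro ln_S_pot_zero_code_le) simp
  also have "\<dots> \<le> ?t * 2 powr (H p * real n) / 2 ^ n"
    by (intro divide_right_mono mult_left_mono card_hamming_ball_le assms(2,3)) simp_all
  finally have ln_S_zero: "ln (S_pot n p e {\<lambda>_. False}) \<le> ?t * 2 powr (H p * real n) / 2 ^ n" .
  have "(\<Sum>b\<in>gen_tuples n k. ln (S_pot n p e (span_code k b)))
      \<le> 2 ^ k * ?N * ln (S_pot n p e {\<lambda>_. False})"
    using assms(1) by (intro sum_ln_S_pot_span_code_le) simp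
  also have "\<dots> \<le> 2 ^ k * ?N * (?t * 2 powr (H p * real n) / 2 ^ n)"
    by (rule mult_left_mono[OF ln_S_zero]) simp
  also have "\<dots> = ?N * 2 powr (real k + e * real n / (1 + e) + H p * real n - real n)"
    by (simp add: powr_add powr_diff powr_realpow)
  also have "real k + e * real n / (1 + e) + H p * real n - real n = - e\<^sup>2 * real n / (1 + e)"
    using assms(1) by (simp add: assms(4) field_simps power2_eq_square)
  finally show ?thesis .
qed

lemma card_gt_mult_ln_le_sum_ln:
  fixes f :: "'a \<Rightarrow> real"
  assumes "finite T" "\<And>b. b \<in> T \<Longrightarrow> f b \<ge> 1" "a > 0"
  shows "card {b \<in> T. a < f b} * ln a \<le> (\<Sum>b\<in>T. ln (f b))"
proof -
  have "card {b \<in> T. a < f b} * ln a = (\<Sum>b\<in>{b \<in> T. a < f b}. ln a)"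
    by simp
  also have "\<dots> \<le> (\<Sum>b\<in>{b \<in> T. a < f b}. ln (f b))"
    using assms(3) by (intro sum_mono) simp
  also have "\<dots> \<le> (\<Sum>b\<in>T. ln (f b))"
    using assms(1,2) by (intro sum_mono2) auto
  finally show ?thesis .
qed

lemma rlc_prob_eq_one_minus:
  "rlc_prob n k P = 1 - card {b \<in> gen_tuples n k. \<not> P (span_code k b)} / card (gen_tuples n k)"
proof -
  let ?T = "gen_tuples n k" and ?bad = "{b \<in> gen_tuples n k. \<not> P (span_code k b)}"
  have "{b \<in> ?T. P (span_code k b)} = ?T - ?bad"
    by blast
  then have "real (card {b \<in> ?T. P (span_code k b)}) = real (card ?T) - card ?bad"
    using finite_gen_tuples by (simp add: card_Diff_subset card_mono of_nat_diff finite_subset)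
  then have "rlc_prob n k P = (real (card ?T) - card ?bad) / card ?T"
    by (simp only: rlc_prob_def)
  also have "\<dots> = 1 - card ?bad / card ?T"
    by (simp add: diff_divide_distrib card_gen_tuples)
  finally show ?thesis .
qed

lemma rlc_prob_S_pot_le_2_ge:
  assumes "e > 0" "0 < p" "p \<le> 1/2" "real k = (1 - H p - e) * real n"
  shows "rlc_prob n k (\<lambda>C. S_pot n p e C \<le> 2) \<ge> 1 - 2 powr (- e\<^sup>2 * real n / (1 + e)) / ln 2"
proof -
  let ?T = "gen_tuples n k" and ?S = "\<lambda>b. S_pot n p e (span_code k b)"
  have "card {b \<in> ?T. 2 < ?S b} * ln 2 \<le> (\<Sum>b\<in>?T. ln (?S b))"
    using S_pot_ge_one assms(1) by (intro card_gt_mult_ln_le_sum_ln finite_gen_tuples) auto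
  also have "\<dots> \<le> card ?T * 2 powr (- e\<^sup>2 * real n / (1 + e))"
    by (rule sum_ln_S_pot_random_code_le[OF assms])
  finally have "card {b \<in> ?T. 2 < ?S b} * ln 2 \<le> card ?T * 2 powr (- e\<^sup>2 * real n / (1 + e))" .
  moreover have "card ?T > 0"
    by (simp add: card_gen_tuples)
  ultimately show ?thesis
    by (simp add: rlc_prob_eq_one_minus not_le field_simps)
qed

theorem lemma2:
  fixes \<epsilon> :: real
  assumes "\<epsilon> > 0"
  shows "\<exists>c>0. \<exists>n0. \<forall>n\<ge>n0. \<forall>p k.
           0 < p \<and> p < 1/2 \<and> real k = (1 - H p - \<epsilon>) * real n \<longrightarrow>
           rlc_prob n k (\<lambda>C. S_pot n p \<epsilon> C \<le> 2) \<ge> 1 - exp (- c * real n)"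
proof -
  define c where "c = \<epsilon>\<^sup>2 * ln 2 / (2 * (1 + \<epsilon>))"
  have "c > 0"
    using assms by (simp add: c_def)
  then have "\<forall>\<^sub>F x in at_top. exp (- 2 * c * x) / ln 2 \<le> exp (- c * x)"
    by real_asymp
  then obtain x0 where x0: "\<And>x. x \<ge> x0 \<Longrightarrow> exp (- 2 * c * x) / ln 2 \<le> exp (- c * x)"
    by (auto simp: eventually_at_top_linorder)
  have "rlc_prob n k (\<lambda>C. S_pot n p \<epsilon> C \<le> 2) \<ge> 1 - exp (- c * real n)"
    if "n \<ge> nat \<lceil>x0\<rceil>" "0 < p" "p < 1/2" "real k = (1 - H p - \<epsilon>) * real n" for n p k
  proof -
    have "2 powr (- \<epsilon>\<^sup>2 * real n / (1 + \<epsilon>)) = exp (- 2 * c * real n)"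
      using assms by (simp add: powr_def c_def field_simps)
    moreover have "exp (- 2 * c * real n) / ln 2 \<le> exp (- c * real n)"
      using that(1) by (intro x0) linarith
    ultimately show ?thesis
      using rlc_prob_S_pot_le_2_ge[OF assms that(2) _ that(4)] that(3) by simp
  qed
  with \<open>c > 0\<close> show ?thesis
    by blast
qed

end
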